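(* Let $P$ be an affine property of finite sets of integers. For each positive integer $n$, let $S(n;P) \subseteq \{1,2,\dots,n\}$ be a subset of largest possible cardinality among the subsets of $\{1,\dots,n\}$ having property $P$, let $f(n;P) = |S(n;P)|$, and let $C_P(n) = f(n;P)/n$. Then $$\sum_{a \in S(n;P)} z^a = C_P(n) \sum_{k=1}^{n} z^k + o(n)$$ as $n \to \infty$, uniformly on $|z| = 1$; that is, $\sup_{|z|=1} \left| \sum_{a \in S(n;P)} z^a - C_P(n) \sum_{k=1}^{n} z^k \right| = o(n)$.
   Context: A property $P$ of finite sets of integers is called affine if (C1) for each fixed pair of integers $\alpha \neq 0$ and $\beta$, a set $\{a_n\}$ has $P$ if and only if $\{\alpha a_n + \beta\}$ has $P$; and (C2) if a set has $P$, then all of its subsets have $P$. Examples: the trivial property of just being a set, or the property of not containing any arithmetic progression of three distinct terms. *)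

theory Defs
  imports "HOL-Analysis.Analysis" "HOL-Library.Landau_Symbols"
begin

definition affine_property :: "(int set \<Rightarrow> bool) \<Rightarrow> bool" where
  "affine_property P \<longleftrightarrow>
     (\<forall>A \<alpha> \<beta>. finite A \<longrightarrow> \<alpha> \<noteq> 0 \<longrightarrow> (P A \<longleftrightarrow> P ((\<lambda>a. \<alpha> * a + \<beta>) ` A))) \<and>
     (\<forall>A B. finite A \<longrightarrow> P A \<longrightarrow> B \<subseteq> A \<longrightarrow> P B)"

definition is_max_P_set :: "(int set \<Rightarrow> bool) \<Rightarrow> nat \<Rightarrow> int set \<Rightarrow> bool" where
  "is_max_P_set P n S \<longleftrightarrow> S \<subseteq> {1..int n} \<and> P S \<and>
     (\<forall>T. T \<subseteq> {1..int n} \<longrightarrow> P T \<longrightarrow> card T \<le> card S)"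

end

theory Submission
  imports Defs "HOL-Analysis.Kronecker_Approximation_Theorem"
begin

text \<open>
  Fix \<open>\<epsilon> > 0\<close> and choose \<open>m\<close> with \<open>f(m;P)/m\<close> within \<open>\<epsilon>\<close> of the infimum of all densities, so
  \<open>f(m;P) \<le> (C\<^sub>P(n) + \<epsilon>) m\<close> for every \<open>n\<close>. For \<open>|z| = 1\<close>, Dirichlet's theorem gives \<open>q \<le> M\<close>
  with \<open>|z^q - 1| \<le> 2\<pi>/M\<close>. Every progression \<open>b, b - q, \<dots>, b - (m-1)q\<close> is an affine image of
  \<open>{1..m}\<close>, so by (C1) and (C2) it meets \<open>S(n;P)\<close> in at most \<open>f(m;P)\<close> points. Write the
  exponential sum as \<open>\<Sum> w(a) z^a\<close> with \<open>w = 1\<^bsub>S(n;P)\<^esub> - C\<^sub>P(n)\<close> on \<open>{1..n}\<close>, so that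
  \<open>\<Sum> w = 0\<close>. Averaging it over the \<open>m\<close> shifts by multiples of \<open>q\<close> costs only
  \<open>O(n m\<^sup>2 |z^q - 1|)\<close> and yields \<open>\<Sum>\<^sub>b W(b) z^b\<close>, where \<open>W(b)\<close> is the sum of \<open>w\<close> over the
  progression ending at \<open>b\<close>. The \<open>W(b)\<close> sum to zero and are at most \<open>\<epsilon> m\<close> apart from \<open>O(mq)\<close>
  incomplete progressions, hence \<open>\<Sum> |W(b)| = O(\<epsilon> m n + m\<^sup>2 q)\<close>; dividing by \<open>m\<close> and taking
  \<open>M \<gg> m/\<epsilon>\<close>, \<open>n \<gg> m M/\<epsilon>\<close> gives the bound \<open>O(\<epsilon> n)\<close> uniformly in \<open>z\<close>.
\<close>

lemma norm_cis_minus_one_le: "norm (cis x - 1) \<le> \<bar>x\<bar>"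
proof -
  have "(norm (cis x - 1))\<^sup>2 = (cos x - 1)\<^sup>2 + (sin x)\<^sup>2"
    by (simp add: cmod_def cis.code)
  also have "\<dots> = 4 * (sin (x/2))\<^sup>2"
    using cos_double_sin[of "x/2"] by (simp add: power2_eq_square algebra_simps)
  also have "\<dots> \<le> 4 * (x/2)\<^sup>2"
    using power_mono[OF abs_sin_x_le_abs_x[of "x/2"], of 2] by (simp add: power_divide)
  also have "\<dots> = \<bar>x\<bar>\<^sup>2" by (simp add: power2_eq_square)
  finally show ?thesis by (rule power2_le_imp_le) simp
qed

lemma unit_circle_Dirichlet:
  fixes z :: complex
  assumes "norm z = 1" "M > 0"
  obtains q :: nat where "0 < q" "q \<le> M" "norm (z^q - 1) \<le> 2*pi/M"
proof -
  define \<theta> where "\<theta> = Arg z / (2*pi)"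
  obtain h k where hk: "0 < k" "k \<le> int M" "\<bar>of_int k * \<theta> - of_int h\<bar> < 1/M"
    using Dirichlet_approx[OF assms(2)] by blast
  define x where "x = 2*pi*(of_int k * \<theta> - of_int h)"
  have "z \<noteq> 0" using assms by auto
  then have z: "z = cis (Arg z)"
    using assms cis_Arg[of z] by (simp add: sgn_div_norm)
  have "z ^ nat k = cis (real (nat k) * Arg z)"
    by (subst z) (simp add: Complex.DeMoivre)
  also have "real (nat k) * Arg z = x + 2*pi * of_int h"
    using hk(1) by (simp add: x_def \<theta>_def algebra_simps)
  also have "cis \<dots> = cis x"
    by (simp add: cis_mult[symmetric])
  finally have "norm (z ^ nat k - 1) \<le> \<bar>x\<bar>"
    using norm_cis_minus_one_le by simp
  also have "\<bar>x\<bar> = 2*pi * \<bar>of_int k * \<theta> - of_int h\<bar>"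
    by (simp add: x_def abs_mult)
  also have "\<dots> \<le> 2*pi/M"
    using mult_left_mono[OF less_imp_le[OF hk(3)], of "2*pi"] by simp
  finally show ?thesis
    using hk(1,2) by (intro that[of "nat k"]) auto
qed

lemma norm_power_sub_power_shift_le:
  fixes z :: "'a::real_normed_field"
  assumes "norm z = 1" "t*q \<le> b"
  shows "norm (z^(b - t*q) - z^b) \<le> t * norm (z^q - 1)"
proof -
  have "z^b = z^(b - t*q) * (z^q)^t"
    using assms(2) by (simp flip: power_add power_mult add: mult.commute)
  then have "z^(b - t*q) - z^b = z^(b - t*q) * (1 - (z^q)^t)"
    by (simp add: algebra_simps)
  then have "norm (z^(b - t*q) - z^b) = norm ((z^q)^t - 1^t)"
    by (simp add: norm_mult norm_power assms(1) norm_minus_commute)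
  also have "\<dots> \<le> t * norm (z^q - 1)"
    by (rule norm_power_diff) (simp_all add: norm_power assms(1))
  finally show ?thesis .
qed

text \<open>The guard \<open>t*q \<le> b\<close> drops the terms whose index would be truncated to \<open>0\<close>.\<close>

definition prog_sum :: "(nat \<Rightarrow> 'a::comm_monoid_add) \<Rightarrow> nat \<Rightarrow> nat \<Rightarrow> nat \<Rightarrow> 'a" where
  "prog_sum w q m b = (\<Sum>t<m. if t*q \<le> b then w (b - t*q) else 0)"

lemma mult_less_of_progression:
  fixes m q b t :: nat
  assumes "(m - 1)*q < b" "t < m"
  shows "t*q < b"
proof -
  have "t*q \<le> (m - 1)*q" by (rule mult_le_mono1) (use assms(2) in simp)
  with assms(1) show ?thesis by linarith
qed

lemma prog_sum_eq:
  assumes "(m - 1)*q < b"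
  shows "prog_sum w q m b = (\<Sum>t<m. w (b - t*q))"
  unfolding prog_sum_def
  by (rule sum.cong) (simp_all add: less_imp_le mult_less_of_progression[OF assms])

lemma sum_lessThan_shift:
  fixes g :: "nat \<Rightarrow> 'a::comm_monoid_add"
  assumes "\<forall>a>n. g a = 0" "d + n < R"
  shows "(\<Sum>b<R. if d \<le> b then g (b - d) else 0) = (\<Sum>a\<le>n. g a)"
proof -
  have "(\<Sum>b<R. if d \<le> b then g (b - d) else 0) = (\<Sum>b\<in>{d..<R}. g (b - d))"
    by (subst sum.If_cases) (auto intro!: sum.cong)
  also have "\<dots> = (\<Sum>a<R - d. g a)"
    using sum.shift_bounds_nat_ivl[of "\<lambda>b. g (b - d)" 0 d "R - d"] assms(2)
    by (simp add: lessThan_atLeast0)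
  also have "\<dots> = (\<Sum>a\<le>n. g a)"
    by (rule sum.mono_neutral_right) (use assms in auto)
  finally show ?thesis .
qed

lemma sum_prog_sum:
  fixes w :: "nat \<Rightarrow> 'a::semiring_1"
  assumes "\<forall>a>n. w a = 0" "q > 0" "n + m*q \<le> R"
  shows "(\<Sum>b<R. prog_sum w q m b) = of_nat m * (\<Sum>a\<le>n. w a)"
proof -
  have "(\<Sum>b<R. prog_sum w q m b) = (\<Sum>t<m. \<Sum>b<R. if t*q \<le> b then w (b - t*q) else 0)"
    unfolding prog_sum_def by (rule sum.swap)
  also have "\<dots> = (\<Sum>t<m. \<Sum>a\<le>n. w a)"
  proof (rule sum.cong[OF refl])
    fix t assume "t \<in> {..<m}"
    with assms(2) have "t*q < m*q" by simp
    with assms(3) have "t*q + n < R" by linarith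
    then show "(\<Sum>b<R. if t*q \<le> b then w (b - t*q) else 0) = (\<Sum>a\<le>n. w a)"
      by (rule sum_lessThan_shift[OF assms(1)])
  qed
  finally show ?thesis by simp
qed

lemma norm_prog_sum_twist_le:
  fixes z :: complex and w :: "nat \<Rightarrow> real"
  assumes "norm z = 1" "\<forall>a. \<bar>w a\<bar> \<le> 1"
  shows "norm (prog_sum (\<lambda>a. of_real (w a) * z^a) q m b - of_real (prog_sum w q m b) * z^b)
           \<le> m * m * norm (z^q - 1)"
proof -
  let ?d = "\<lambda>t. if t*q \<le> b then of_real (w (b - t*q)) * (z^(b - t*q) - z^b) else 0"
  have "prog_sum (\<lambda>a. of_real (w a) * z^a) q m b - of_real (prog_sum w q m b) * z^b
          = (\<Sum>t<m. ?d t)"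
    unfolding prog_sum_def of_real_sum sum_distrib_right sum_subtractf[symmetric]
    by (rule sum.cong) (auto simp: algebra_simps)
  also have "norm \<dots> \<le> (\<Sum>t<m. m * norm (z^q - 1))"
  proof (rule order_trans[OF norm_sum sum_mono])
    fix t assume t: "t \<in> {..<m}"
    show "norm (?d t) \<le> m * norm (z^q - 1)"
    proof (cases "t*q \<le> b")
      case True
      have "norm (?d t) = \<bar>w (b - t*q)\<bar> * norm (z^(b - t*q) - z^b)"
        using True by (simp add: norm_mult)
      also have "\<dots> \<le> 1 * (t * norm (z^q - 1))"
        using assms(2) norm_power_sub_power_shift_le[OF assms(1) True]
        by (intro mult_mono) auto
      also have "\<dots> \<le> m * norm (z^q - 1)"
        using t by (simp add: mult_right_mono)
      finally show ?thesis .
    qed simp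
  qed
  finally show ?thesis by simp
qed

lemma sum_abs_prog_sum_le:
  fixes w :: "nat \<Rightarrow> real" and \<epsilon> :: real
  assumes "\<forall>a>n. w a = 0" "\<forall>a. \<bar>w a\<bar> \<le> 1" "(\<Sum>a\<le>n. w a) = 0"
    and "q > 0" "m > 0" "\<epsilon> \<ge> 0"
    and long: "\<forall>b. (m - 1)*q < b \<and> b \<le> n \<longrightarrow> prog_sum w q m b \<le> \<epsilon>*m"
  shows "(\<Sum>b < n + m*q. \<bar>prog_sum w q m b\<bar>) \<le> 2*(n + m*q)*\<epsilon>*m + 4*m*m*q"
proof -
  define R where "R = n + m*q"
  define W where "W = prog_sum w q m"
  define B where "B = {b\<in>{..<R}. b \<le> (m - 1)*q \<or> n < b}"
  have "card B \<le> card ({..(m - 1)*q} \<union> {n<..<R})"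
    by (rule card_mono) (auto simp: B_def)
  also have "\<dots> \<le> (m - 1)*q + 1 + (R - Suc n)"
    using card_Un_le[of "{..(m - 1)*q}" "{n<..<R}"] by simp
  also have "\<dots> \<le> 2*m*q"
    using assms(4,5) by (cases m) (auto simp: R_def algebra_simps)
  finally have card_B: "card B \<le> 2*m*q" .
  have W_le: "W b \<le> \<epsilon>*m + (if b \<in> B then real m else 0)" if "b < R" for b
  proof (cases "b \<in> B")
    case True
    have "W b \<le> (\<Sum>t<m. 1)"
      unfolding W_def prog_sum_def by (rule sum_mono) (use assms(2) in \<open>auto simp: abs_le_iff\<close>)
    moreover have "0 \<le> \<epsilon>*m" using assms(6) by simp
    ultimately show ?thesis using True by simp
  next
    case False
    with that have "(m - 1)*q < b" "b \<le> n" by (auto simp: B_def)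
    with False long show ?thesis by (simp add: W_def)
  qed
  have "(\<Sum>b<R. W b) = 0"
    using sum_prog_sum[OF assms(1,4)] assms(3) by (simp add: W_def R_def)
  text \<open>Since the \<open>W b\<close> sum to zero, their absolute values sum to twice their positive parts.\<close>
  moreover have "(\<Sum>b<R. \<bar>W b\<bar>) = (\<Sum>b<R. 2 * max (W b) 0 - W b)"
    by (rule sum.cong) auto
  ultimately have "(\<Sum>b<R. \<bar>W b\<bar>) = 2 * (\<Sum>b<R. max (W b) 0)"
    by (simp add: sum_subtractf sum_distrib_left)
  also have "\<dots> \<le> 2 * (\<Sum>b<R. \<epsilon>*m + (if b \<in> B then real m else 0))"
    using W_le assms(6) by (intro mult_left_mono sum_mono) auto
  also have "\<dots> = 2 * (R*(\<epsilon>*m) + m * card B)"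
  proof -
    have "{..<R} \<inter> B = B" by (auto simp: B_def)
    then show ?thesis by (simp add: sum.distrib sum.If_cases)
  qed
  also have "\<dots> \<le> 2 * (R*(\<epsilon>*m) + m * (2*m*q))"
    using card_B by (intro mult_left_mono add_left_mono) (auto simp flip: of_nat_mult)
  finally show ?thesis by (simp add: W_def R_def algebra_simps)
qed

lemma norm_balanced_exp_sum_le:
  fixes z :: complex and w :: "nat \<Rightarrow> real" and \<epsilon> :: real
  assumes "norm z = 1" "\<forall>a>n. w a = 0" "\<forall>a. \<bar>w a\<bar> \<le> 1" "(\<Sum>a\<le>n. w a) = 0"
    and "q > 0" "m > 0" "\<epsilon> \<ge> 0"
    and "\<forall>b. (m - 1)*q < b \<and> b \<le> n \<longrightarrow> prog_sum w q m b \<le> \<epsilon>*m"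
  shows "norm (\<Sum>a\<le>n. of_real (w a) * z^a)
           \<le> 2*(n + m*q)*\<epsilon> + 4*m*q + (n + m*q)*m*norm (z^q - 1)"
proof -
  define R where "R = n + m*q"
  define T where "T = (\<Sum>a\<le>n. of_real (w a) * z^a)"
  define W where "W = prog_sum w q m"
  define D where "D b = prog_sum (\<lambda>a. of_real (w a) * z^a) q m b - of_real (W b) * z^b" for b
  have "of_nat m * T = (\<Sum>b<R. prog_sum (\<lambda>a. of_real (w a) * z^a) q m b)"
    using sum_prog_sum[of n "\<lambda>a. of_real (w a) * z^a", OF _ assms(5)] assms(2)
    by (simp add: R_def T_def)
  also have "\<dots> = (\<Sum>b<R. of_real (W b) * z^b) + (\<Sum>b<R. D b)"
    by (simp add: D_def sum_subtractf)
  finally have "m * norm T \<le> norm (\<Sum>b<R. of_real (W b) * z^b) + norm (\<Sum>b<R. D b)"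
    by (metis norm_mult norm_of_nat norm_triangle_ineq)
  also have "\<dots> \<le> (\<Sum>b<R. \<bar>W b\<bar>) + (\<Sum>b<R. m*m*norm (z^q - 1))"
    using norm_prog_sum_twist_le[OF assms(1,3)]
    by (intro add_mono order_trans[OF norm_sum sum_mono]) (auto simp: D_def W_def norm_mult norm_power assms(1))
  also have "\<dots> \<le> 2*R*\<epsilon>*m + 4*m*m*q + R*(m*m*norm (z^q - 1))"
    using sum_abs_prog_sum_le[OF assms(2-8)] by (simp add: R_def W_def)
  finally have "m * norm T \<le> m * (2*R*\<epsilon> + 4*m*q + R*m*norm (z^q - 1))"
    by (simp add: algebra_simps)
  with assms(6) show ?thesis
    by (simp add: R_def T_def)
qed

lemma sum_int_subset_atLeastAtMost:
  fixes A :: "int set"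
  assumes "A \<subseteq> {1..int n}"
  shows "(\<Sum>a\<in>A. g (nat a)) = (\<Sum>k=1..n. if int k \<in> A then g k else 0)"
proof -
  have A_eq: "A = int ` {k\<in>{1..n}. int k \<in> A}"
  proof (rule equalityI[OF subsetI])
    fix a assume "a \<in> A"
    moreover from this assms have "1 \<le> a" "a \<le> int n" by auto
    ultimately show "a \<in> int ` {k\<in>{1..n}. int k \<in> A}"
      by (intro image_eqI[of a int "nat a"]) auto
  qed auto
  have "(\<Sum>a\<in>A. g (nat a)) = (\<Sum>k\<in>{k\<in>{1..n}. int k \<in> A}. g k)"
    by (subst (1) A_eq) (simp add: sum.reindex)
  also have "\<dots> = (\<Sum>k=1..n. if int k \<in> A then g k else 0)"
    by (rule sum.inter_filter) simp
  finally show ?thesis .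
qed

lemma norm_exp_sum_sub_density_le:
  fixes A :: "int set" and z :: complex and m q :: nat and \<epsilon> :: real
  assumes A: "A \<subseteq> {1..int n}" and "n > 0" "norm z = 1" "q > 0" "m > 0" "\<epsilon> \<ge> 0"
    and progressions: "\<forall>b. (m - 1)*q < b \<and> b \<le> n \<longrightarrow>
                          card {t\<in>{..<m}. int (b - t*q) \<in> A} \<le> (card A / n + \<epsilon>) * m"
  shows "norm ((\<Sum>a\<in>A. z ^ nat a) - of_real (card A / n) * (\<Sum>k=1..n. z^k))
           \<le> 2*(n + m*q)*\<epsilon> + 4*m*q + (n + m*q)*m*norm (z^q - 1)"
proof -
  define C where "C = card A / n"
  define w where "w a = (if a \<in> {1..n} then of_bool (int a \<in> A) - C else 0)" for a
  have "card A \<le> card {1..int n}"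
    using A by (intro card_mono) auto
  with \<open>n > 0\<close> have C: "0 \<le> C" "C \<le> 1"
    by (auto simp: C_def field_simps)
  have w_sum: "(\<Sum>a\<le>n. of_real (w a) * g a) = (\<Sum>a\<in>A. g (nat a)) - of_real C * (\<Sum>k=1..n. g k)"
    for g :: "nat \<Rightarrow> 'a::real_algebra_1"
  proof -
    have "(\<Sum>a\<le>n. of_real (w a) * g a) = (\<Sum>a=1..n. of_real (w a) * g a)"
      by (rule sum.mono_neutral_right) (auto simp: w_def)
    also have "\<dots> = (\<Sum>a=1..n. (if int a \<in> A then g a else 0) - of_real C * g a)"
      by (rule sum.cong) (auto simp: w_def algebra_simps)
    finally show ?thesis
      by (simp add: sum_subtractf sum_distrib_left sum_int_subset_atLeastAtMost[OF A])
  qed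
  have "(\<Sum>a\<le>n. w a) = 0"
    using w_sum[of "\<lambda>_. 1::real"] \<open>n > 0\<close> by (simp add: C_def)
  moreover have "\<forall>a>n. w a = 0" "\<forall>a. \<bar>w a\<bar> \<le> 1"
    using C by (auto simp: w_def)
  moreover have "prog_sum w q m b \<le> \<epsilon>*m" if "(m - 1)*q < b" "b \<le> n" for b
  proof -
    have "prog_sum w q m b = (\<Sum>t<m. of_bool (int (b - t*q) \<in> A) - C)"
      unfolding prog_sum_eq[OF that(1)]
    proof (rule sum.cong[OF refl])
      fix t assume "t \<in> {..<m}"
      with mult_less_of_progression[OF that(1)] that(2) have "b - t*q \<in> {1..n}" by force
      then show "w (b - t*q) = of_bool (int (b - t*q) \<in> A) - C" by (simp add: w_def)
    qed
    also have "\<dots> = card {t\<in>{..<m}. int (b - t*q) \<in> A} - m*C"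
      by (simp add: sum_subtractf of_bool_def sum.If_cases Int_def)
    also have "\<dots> \<le> \<epsilon>*m"
      using progressions that by (simp add: C_def algebra_simps)
    finally show ?thesis .
  qed
  ultimately show ?thesis
    using norm_balanced_exp_sum_le[OF assms(3) _ _ _ assms(4-6), of n w] by (simp add: w_sum C_def)
qed

lemma card_le_max_P_set_if_subset_affine_image:
  fixes \<alpha> \<beta> :: int
  assumes P: "affine_property P" and max: "is_max_P_set P m Sm"
    and X: "finite X" "P X" "X \<subseteq> (\<lambda>x. \<alpha>*x + \<beta>) ` {1..int m}" and "\<alpha> \<noteq> 0"
  shows "card X \<le> card Sm"
proof -
  define Y where "Y = {y\<in>{1..int m}. \<alpha>*y + \<beta> \<in> X}"
  have X_eq: "X = (\<lambda>x. \<alpha>*x + \<beta>) ` Y"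
    using X(3) unfolding Y_def by blast
  have "finite Y" by (rule finite_subset[of _ "{1..int m}"]) (auto simp: Y_def)
  with P X(2) X_eq \<open>\<alpha> \<noteq> 0\<close> have "P Y"
    unfolding affine_property_def by blast
  moreover have "Y \<subseteq> {1..int m}" by (auto simp: Y_def)
  ultimately have "card Y \<le> card Sm"
    using max by (auto simp: is_max_P_set_def)
  moreover have "card X \<le> card Y"
    unfolding X_eq using \<open>finite Y\<close> by (rule card_image_le)
  ultimately show ?thesis by simp
qed

lemma card_progression_inter_max_P_set_le:
  fixes q b :: nat
  assumes P: "affine_property P" and max_n: "is_max_P_set P n Sn" and max_m: "is_max_P_set P m Sm"
    and "q > 0" "(m - 1)*q < b"
  shows "card {t\<in>{..<m}. int (b - t*q) \<in> Sn} \<le> card Sm"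
proof -
  define T where "T = {t\<in>{..<m}. int (b - t*q) \<in> Sn}"
  define g where "g t = - int q * int t + int b" for t
  have g_eq: "int (b - t*q) = g t" if "t < m" for t
    using mult_less_of_progression[OF assms(5) that] by (simp add: g_def)
  have "inj_on g T"
    using \<open>q > 0\<close> by (auto simp: inj_on_def g_def)
  then have "card (g ` T) = card T"
    by (rule card_image)
  have sub: "g ` T \<subseteq> Sn"
    using g_eq by (auto simp: T_def)
  have "finite Sn" "P Sn"
    using max_n by (auto simp: is_max_P_set_def intro: finite_subset)
  then have "P (g ` T)"
    using P sub unfolding affine_property_def by blast
  moreover have "g ` T \<subseteq> (\<lambda>x. - int q * x + (int b + int q)) ` {1..int m}"
  proof
    fix y assume "y \<in> g ` T"
    then obtain t where "t < m" "y = g t" by (auto simp: T_def)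
    then show "y \<in> (\<lambda>x. - int q * x + (int b + int q)) ` {1..int m}"
      by (intro image_eqI[of y _ "int t + 1"]) (auto simp: g_def algebra_simps)
  qed
  ultimately have "card (g ` T) \<le> card Sm"
    using \<open>finite Sn\<close> sub \<open>q > 0\<close> finite_subset
    by (intro card_le_max_P_set_if_subset_affine_image[OF P max_m, of _ "- int q"]) auto
  with \<open>card (g ` T) = card T\<close> show ?thesis
    by (simp add: T_def)
qed

lemma exists_nearly_minimal_value:
  fixes f :: "nat \<Rightarrow> real"
  assumes "\<And>n. 0 \<le> f n" "\<epsilon> > 0"
  obtains m where "m > 0" "\<And>n. n > 0 \<Longrightarrow> f m \<le> f n + \<epsilon>"
proof -
  define L where "L = (INF n\<in>{0<..}. f n)"
  have bdd: "bdd_below (f ` {0<..})"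
    using assms(1) by (intro bdd_belowI2[of _ 0]) auto
  have "{0::nat<..} \<noteq> {}" "L < L + \<epsilon>" using assms(2) by auto
  then have "\<exists>m\<in>{0<..}. f m < L + \<epsilon>"
    using cINF_less_iff[OF _ bdd] unfolding L_def by blast
  then obtain m where "m > 0" "f m < L + \<epsilon>" by auto
  moreover have "L \<le> f n" if "n > 0" for n
    unfolding L_def by (rule cINF_lower[OF bdd]) (use that in simp)
  ultimately show ?thesis
    by (intro that[of m]) (auto intro: less_imp_le order.strict_trans2 add_right_mono)
qed

lemma norm_exp_sum_sub_density_le_of_nearly_minimal:
  fixes P :: "int set \<Rightarrow> bool" and S :: "nat \<Rightarrow> int set" and m n M :: nat
    and z :: complex and \<delta> :: real
  assumes P: "affine_property P" and max: "\<And>n. n > 0 \<Longrightarrow> is_max_P_set P n (S n)"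
    and "m > 0" and density_m: "card (S m) / m \<le> card (S n) / n + \<delta>"
    and "M > 0" and M: "2*pi*m/M \<le> \<delta>/2"
    and n: "m*M \<le> n" "4*m*M \<le> \<delta>*n" and z: "norm z = 1"
  shows "norm ((\<Sum>a\<in>S n. z ^ nat a) - of_real (card (S n) / n) * (\<Sum>k=1..n. z^k)) \<le> 6*\<delta>*n"
proof -
  have "m*M > 0" using \<open>m > 0\<close> \<open>M > 0\<close> by simp
  with n(1) have "n > 0" by linarith
  have "0 \<le> 2*pi*m/M" by simp
  with M have "\<delta> \<ge> 0" by linarith
  obtain q where q: "0 < q" "q \<le> M" "norm (z^q - 1) \<le> 2*pi/M"
    using unit_circle_Dirichlet[OF z \<open>M > 0\<close>] .
  have progressions: "\<forall>b. (m - 1)*q < b \<and> b \<le> n \<longrightarrow>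
                        card {t\<in>{..<m}. int (b - t*q) \<in> S n} \<le> (card (S n) / n + \<delta>) * m"
  proof (intro allI impI)
    fix b assume "(m - 1)*q < b \<and> b \<le> n"
    then have "real (card {t\<in>{..<m}. int (b - t*q) \<in> S n}) \<le> card (S m)"
      using card_progression_inter_max_P_set_le[OF P max[OF \<open>n > 0\<close>] max[OF \<open>m > 0\<close>] \<open>q > 0\<close>]
      by simp
    also have "\<dots> = card (S m) / m * m" using \<open>m > 0\<close> by simp
    also have "\<dots> \<le> (card (S n) / n + \<delta>) * m"
      using density_m by (rule mult_right_mono) simp
    finally show "card {t\<in>{..<m}. int (b - t*q) \<in> S n} \<le> (card (S n) / n + \<delta>) * m" .
  qed
  have "S n \<subseteq> {1..int n}" using max[OF \<open>n > 0\<close>] by (simp add: is_max_P_set_def)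
  from norm_exp_sum_sub_density_le[OF this \<open>n > 0\<close> z \<open>q > 0\<close> \<open>m > 0\<close> \<open>\<delta> \<ge> 0\<close> progressions]
  have "norm ((\<Sum>a\<in>S n. z ^ nat a) - of_real (card (S n) / n) * (\<Sum>k=1..n. z^k))
          \<le> 2*(n + m*q)*\<delta> + 4*m*q + (n + m*q)*(m*norm (z^q - 1))"
    by (simp add: mult.assoc)
  also have "\<dots> \<le> 2*(2*n)*\<delta> + \<delta>*n + (2*n)*(\<delta>/2)"
  proof -
    have "m*q \<le> m*M" using q(2) by simp
    then have "real (n + m*q) \<le> 2*n" "real (4*m*q) \<le> 4*m*M"
      using n(1) by linarith+
    moreover have "m*norm (z^q - 1) \<le> \<delta>/2"
    proof -
      have "m*norm (z^q - 1) \<le> m*(2*pi/M)" using q(3) by (rule mult_left_mono) simp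
      also have "\<dots> = 2*pi*m/M" by simp
      finally show ?thesis using M by linarith
    qed
    ultimately show ?thesis
      using n(2) \<open>\<delta> \<ge> 0\<close> by (intro add_mono mult_right_mono mult_mono) auto
  qed
  also have "\<dots> = 6*\<delta>*n" by simp
  finally show ?thesis .
qed

lemma eventually_norm_exp_sum_sub_density_le:
  fixes P :: "int set \<Rightarrow> bool" and S :: "nat \<Rightarrow> int set" and \<epsilon> :: real
  assumes P: "affine_property P" and max: "\<And>n. n > 0 \<Longrightarrow> is_max_P_set P n (S n)"
    and "\<epsilon> > 0"
  shows "eventually (\<lambda>n. \<forall>z::complex. norm z = 1 \<longrightarrow>
           norm ((\<Sum>a\<in>S n. z ^ nat a) - of_real (card (S n) / n) * (\<Sum>k=1..n. z^k)) \<le> \<epsilon> * n)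
         at_top"
proof -
  define \<delta> where "\<delta> = \<epsilon>/6"
  have "\<delta> > 0" using \<open>\<epsilon> > 0\<close> by (simp add: \<delta>_def)
  obtain m where "m > 0" and density_m: "\<And>n. n > 0 \<Longrightarrow> card (S m) / m \<le> card (S n) / n + \<delta>"
    using exists_nearly_minimal_value[of "\<lambda>n. card (S n) / n", OF _ \<open>\<delta> > 0\<close>] by auto
  define M :: nat where "M = nat \<lceil>4*pi*m/\<delta>\<rceil> + 1"
  have "M > 0" "4*pi*m/\<delta> \<le> M" by (auto simp: M_def) linarith
  then have M: "2*pi*m/M \<le> \<delta>/2"
    using \<open>\<delta> > 0\<close> by (simp add: field_simps)
  define N where "N = nat \<lceil>4*m*M/\<delta>\<rceil> + m*M"
  have "norm ((\<Sum>a\<in>S n. z ^ nat a) - of_real (card (S n) / n) * (\<Sum>k=1..n. z^k)) \<le> \<epsilon> * n"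
    if "N \<le> n" and z: "norm z = 1" for n and z :: complex
  proof -
    have n: "m*M \<le> n" "4*m*M/\<delta> \<le> n" using that(1) by (auto simp: N_def) linarith
    moreover have "m*M > 0" using \<open>m > 0\<close> \<open>M > 0\<close> by simp
    ultimately have "n > 0" by linarith
    have "4*m*M \<le> \<delta>*n"
      using n(2) \<open>\<delta> > 0\<close> by (simp add: field_simps)
    from norm_exp_sum_sub_density_le_of_nearly_minimal
      [OF P max \<open>m > 0\<close> density_m[OF \<open>n > 0\<close>] \<open>M > 0\<close> M n(1) this z]
    show ?thesis by (simp add: \<delta>_def)
  qed
  then show ?thesis
    by (intro eventually_at_top_linorderI[of N]) blast
qed

lemma norm_SUP_le:
  fixes f :: "'a \<Rightarrow> real"
  assumes "A \<noteq> {}" "\<And>x. x \<in> A \<Longrightarrow> 0 \<le> f x" "\<And>x. x \<in> A \<Longrightarrow> f x \<le> B"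
  shows "norm (SUP x\<in>A. f x) \<le> B"
proof -
  from assms(1) obtain x where "x \<in> A" by blast
  have "bdd_above (f ` A)" using assms(3) by (intro bdd_aboveI2) auto
  then have "0 \<le> (SUP x\<in>A. f x)"
    using assms(2) \<open>x \<in> A\<close> by (meson cSUP_upper order_trans)
  moreover have "(SUP x\<in>A. f x) \<le> B"
    using assms(1,3) by (rule cSUP_least)
  ultimately show ?thesis by simp
qed

theorem mainTheorem2:
  fixes P :: "int set \<Rightarrow> bool" and S :: "nat \<Rightarrow> int set"
  assumes "affine_property P"
    and "\<And>n. n > 0 \<Longrightarrow> is_max_P_set P n (S n)"
  shows "(\<lambda>n. SUP z\<in>{z::complex. norm z = 1}.
            norm ((\<Sum>a\<in>S n. z ^ nat a)
                  - complex_of_real (real (card (S n)) / real n) * (\<Sum>k=1..n. z ^ k)))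
         \<in> o(\<lambda>n. real n)"
proof (rule landau_o.smallI)
  fix c :: real assume "c > 0"
  have ne: "{z::complex. norm z = 1} \<noteq> {}" by (auto intro: exI[of _ 1])
  have "eventually (\<lambda>n. \<forall>z::complex. norm z = 1 \<longrightarrow>
           norm ((\<Sum>a\<in>S n. z ^ nat a) - of_real (card (S n) / n) * (\<Sum>k=1..n. z^k)) \<le> c * n)
         at_top"
    using assms \<open>c > 0\<close> by (rule eventually_norm_exp_sum_sub_density_le)
  then show "eventually (\<lambda>n. norm (SUP z\<in>{z::complex. norm z = 1}.
            norm ((\<Sum>a\<in>S n. z ^ nat a)
                  - complex_of_real (real (card (S n)) / real n) * (\<Sum>k=1..n. z ^ k)))
          \<le> c * norm (real n)) at_top"
    by eventually_elim (rule norm_SUP_le[OF ne], auto)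
qed

end
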